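(* For every $m\ge 2$, the determinant of the $m$th order $2$-dimensional Pascal tensor satisfies $f(m,2)=\left[(m-1)!\right]^m$.
   Context: The $m$th order $n$-dimensional Pascal tensor is $\mathcal{P}=(p_{i_1\dots i_m})$ with $p_{i_1\dots i_m}=\frac{(i_1+\dots+i_m-m)!}{(i_1-1)!\cdots(i_m-1)!}$, $i_1,\dots,i_m\in\{1,\dots,n\}$ (for $m=2$ the symmetric Pascal matrix, with ordinary determinant). The determinant of a symmetric tensor $\mathcal{A}$ is the resultant of the system $\mathcal{A}\mathbf{x}^{m-1}=\mathbf{0}$, where $(\mathcal{A}\mathbf{x}^{m-1})_i=\sum_{i_2,\dots,i_m}a_{i i_2\dots i_m}x_{i_2}\cdots x_{i_m}$; $f(m,n)$ denotes $\det(\mathcal{P})$. For $n=2$ this is the Sylvester resultant of the two binary forms $(\mathcal{P}\mathbf{x}^{m-1})_1=\sum_{k=0}^{m-1}a_kx_1^{m-1-k}x_2^k$ and $(\mathcal{P}\mathbf{x}^{m-1})_2=\sum_{k=0}^{m-1}b_kx_1^{m-1-k}x_2^k$ with $a_k=\binom{m-1}{k}k!$, $b_k=\binom{m-1}{k}(k+1)!$, i.e. the determinant of the $2(m-1)\times 2(m-1)$ matrix whose first $m-1$ rows are successive right-shifts of $(a_0,\dots,a_{m-1},0,\dots,0)$ and whose last $m-1$ rows are successive right-shifts of $(b_0,\dots,b_{m-1},0,\dots,0)$. *)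

theory Defs
  imports "Jordan_Normal_Form.Determinant"
begin

text \<open>Entry of the Pascal tensor, indices given as a list (i_1,...,i_m), each i_j \<ge> 1:
  p = (i_1+...+i_m - m)! / ((i_1-1)! ... (i_m-1)!)  (an exact integer division).\<close>
definition pascal_entry :: "nat list \<Rightarrow> nat" where
  "pascal_entry is = fact (sum_list (map (\<lambda>i. i - 1) is)) div prod_list (map (\<lambda>i. fact (i - 1)) is)"

text \<open>Coefficient of x_1^(m-1-k) x_2^k in (P x^(m-1))_i for the 2-dimensional Pascal tensor
  (P symmetric, so it is binom(m-1,k) times the entry with m-1-k indices 1 and k indices 2).\<close>
definition pascal2_coeff :: "nat \<Rightarrow> nat \<Rightarrow> nat \<Rightarrow> int" where
  "pascal2_coeff m i k =
     int ((m - 1) choose k) * int (pascal_entry (i # replicate (m - 1 - k) 1 @ replicate k 2))"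

text \<open>Sylvester matrix of the two binary forms (P x^(m-1))_1 and (P x^(m-1))_2, of size 2(m-1).\<close>
definition pascal2_sylvester :: "nat \<Rightarrow> int mat" where
  "pascal2_sylvester m = mat (2 * (m - 1)) (2 * (m - 1))
     (\<lambda>(r, c). if r < m - 1
        then (if r \<le> c \<and> c - r \<le> m - 1 then pascal2_coeff m 1 (c - r) else 0)
        else (let r' = r - (m - 1) in
              if r' \<le> c \<and> c - r' \<le> m - 1 then pascal2_coeff m 2 (c - r') else 0))"

definition pascal_det2 :: "nat \<Rightarrow> int" where
  "pascal_det2 m = det (pascal2_sylvester m)"

end

theory Submission
  imports Defs
begin

text \<open>
  Put N = m - 1. The two binary forms have coefficients a_k = (N choose k) k! and
  b_k = (k + 1) a_k, and a_(k+1) = (N - k) a_k, so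
  b_k - (N + 1) a_k + a_(k+1) vanishes except at k = -1, where it is 1.
  Consequently, in the Sylvester matrix, the b-row shifted by i \<ge> 1 minus N + 1 times the
  a-row shifted by i plus the a-row shifted by i - 1 is a unit vector, and the unshifted
  b-row minus N + 1 times the unshifted a-row is the negated a-row shifted one step left.
  After reordering rows the resulting matrix is lower triangular with diagonal
  1, \<dots>, 1, -a_N, a_N, \<dots>, a_N, and a_N = N!.
\<close>

text \<open>Coefficient sequences are indexed by integers, so that entries left of the band are
  values at negative indices rather than junk from truncated subtraction.\<close>

definition sylvester_seq_mat :: "nat \<Rightarrow> (int \<Rightarrow> 'a) \<Rightarrow> (int \<Rightarrow> 'a) \<Rightarrow> 'a mat" where
  "sylvester_seq_mat N a b = mat (2 * N) (2 * N)
     (\<lambda>(r, c). if r < N then a (int c - int r) else b (int c - int (r - N)))"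

lemma sylvester_seq_mat_carrier: "sylvester_seq_mat N a b \<in> carrier_mat (2 * N) (2 * N)"
  by (simp add: sylvester_seq_mat_def)

definition elim_mat :: "nat \<Rightarrow> 'a \<Rightarrow> 'a :: comm_ring_1 mat" where
  "elim_mat N x = mat (2 * N) (2 * N) (\<lambda>(r, j).
     (if j = r then 1 else 0) - (if N \<le> r \<and> j = r - N then x else 0)
     + (if N < r \<and> j = r - N - 1 then 1 else 0))"

lemma elim_mat_carrier: "elim_mat N x \<in> carrier_mat (2 * N) (2 * N)"
  by (simp add: elim_mat_def)

lemma det_elim_mat: "det (elim_mat N x) = 1"
proof -
  have "det (elim_mat N x) = prod_list (diag_mat (elim_mat N x))"
    by (rule det_lower_triangular[OF _ elim_mat_carrier]) (auto simp: elim_mat_def)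
  also have "\<dots> = (\<Prod>i = 0..<2 * N. elim_mat N x $$ (i, i))"
    by (simp add: prod_list_diag_prod elim_mat_def)
  also have "\<dots> = 1"
    by (rule prod.neutral) (auto simp: elim_mat_def)
  finally show ?thesis .
qed

lemma elim_mat_mult_index:
  assumes A: "A \<in> carrier_mat (2 * N) (2 * N)" and r: "r < 2 * N" and c: "c < 2 * N"
  shows "(elim_mat N x * A) $$ (r, c) = A $$ (r, c) - (if N \<le> r then x * A $$ (r - N, c) else 0)
           + (if N < r then A $$ (r - N - 1, c) else 0)"
proof -
  have "(elim_mat N x * A) $$ (r, c) = (\<Sum>j = 0..<2 * N. elim_mat N x $$ (r, j) * A $$ (j, c))"
    using A r c by (simp add: elim_mat_def scalar_prod_def)
  also have "\<dots> = (\<Sum>j = 0..<2 * N. (if j = r then A $$ (j, c) else 0)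
      - (if N \<le> r \<and> j = r - N then x * A $$ (j, c) else 0)
      + (if N < r \<and> j = r - N - 1 then A $$ (j, c) else 0))"
    by (rule sum.cong[OF refl]) (use r in \<open>auto simp: elim_mat_def ring_distribs\<close>)
  also have "\<dots> = (\<Sum>j = 0..<2 * N. (if j = r then A $$ (j, c) else 0))
      - (\<Sum>j = 0..<2 * N. (if N \<le> r \<and> j = r - N then x * A $$ (j, c) else 0))
      + (\<Sum>j = 0..<2 * N. (if N < r \<and> j = r - N - 1 then A $$ (j, c) else 0))"
    by (simp only: sum.distrib sum_subtractf)
  also have "\<dots> = A $$ (r, c) - (if N \<le> r then x * A $$ (r - N, c) else 0)
           + (if N < r then A $$ (r - N - 1, c) else 0)"
    using r by (auto simp: sum.delta')
  finally show ?thesis .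
qed

lemma elim_mat_mult_sylvester_seq_mat_index:
  assumes rec: "\<And>k. b k - x * a k + a (k + 1) = (if k = -1 then 1 else 0)"
    and r: "r < 2 * N" and c: "c < 2 * N"
  shows "(elim_mat N x * sylvester_seq_mat N a b) $$ (r, c) =
    (if r < N then a (int c - int r) else if r = N then - a (int c + 1)
     else if c + 1 = r - N then 1 else 0)"
proof -
  let ?S = "sylvester_seq_mat N a b"
  have S: "?S $$ (i, c) = (if i < N then a (int c - int i) else b (int c - int (i - N)))"
    if "i < 2 * N" for i
    using that c by (simp add: sylvester_seq_mat_def)
  note E = elim_mat_mult_index[OF sylvester_seq_mat_carrier[of N a b] r c, of x]
  consider "r < N" | "r = N" | "N < r" by linarith
  then show ?thesis
  proof cases
    case 1
    then show ?thesis
      using E S r by simp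
  next
    case 2
    then have "(elim_mat N x * ?S) $$ (r, c) = b (int c) - x * a (int c)"
      using E S r by simp
    also have "\<dots> = - a (int c + 1)"
      using rec[of "int c"] by (simp add: algebra_simps)
    finally show ?thesis using 2 by simp
  next
    case 3
    define k where "k = int c - int (r - N)"
    have lt: "r - N < N" "r - N - 1 < N" and shift: "int c - int (r - N - 1) = k + 1"
      using r 3 by (auto simp: k_def)
    have "?S $$ (r, c) = b k" "?S $$ (r - N, c) = a k"
      using S[of r] S[of "r - N"] r 3 lt by (simp_all add: k_def)
    moreover have "?S $$ (r - N - 1, c) = a (k + 1)"
      using S[of "r - N - 1"] r lt by (simp flip: shift)
    ultimately have "(elim_mat N x * ?S) $$ (r, c) = b k - x * a k + a (k + 1)"
      using E 3 by simp
    also have "\<dots> = (if c + 1 = r - N then 1 else 0)"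
    proof -
      have "(int c - int (r - N) = -1) = (c + 1 = r - N)" by linarith
      then show ?thesis unfolding rec k_def by simp
    qed
    finally show ?thesis using 3 by simp
  qed
qed

lemma det_rotate_row_halves:
  assumes A: "A \<in> carrier_mat (2 * N) (2 * N)" and N: "1 \<le> N"
  shows "det A = (-1) ^ (N * N + (N - 1)) * det (mat (2 * N) (2 * N) (\<lambda>(i, j).
    A $$ (if i < N - 1 then i + N + 1 else if i < N then N else i - N, j)))"
proof -
  define P where "P = mat (N + N) (N + N) (\<lambda>(i, j). A $$ (if i < N then i + N else i - N, j))"
  have A': "A \<in> carrier_mat (N + N) (N + N)" using A by (simp add: mult_2)
  have "det A = (-1) ^ (N * N) * det P"
    unfolding P_def by (rule det_swap_rows[OF A'])
  also have "det P = (-1) ^ (1 * (N - 1)) * det (mat (N + N) (N + N) (\<lambda>(i, j).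
      P $$ (if i < N - 1 then i + 1 else if i < 1 + (N - 1) then i - (N - 1) else i, j)))"
    by (rule det_swap_initial_rows) (use N in \<open>auto simp: P_def\<close>)
  also have "mat (N + N) (N + N) (\<lambda>(i, j).
      P $$ (if i < N - 1 then i + 1 else if i < 1 + (N - 1) then i - (N - 1) else i, j))
    = mat (2 * N) (2 * N) (\<lambda>(i, j).
      A $$ (if i < N - 1 then i + N + 1 else if i < N then N else i - N, j))"
    by (rule eq_matI) (use N in \<open>auto simp: P_def mult_2\<close>)
  finally show ?thesis by (simp add: power_add)
qed

definition reduced_sylvester_mat :: "nat \<Rightarrow> (int \<Rightarrow> 'a) \<Rightarrow> 'a :: comm_ring_1 mat" where
  "reduced_sylvester_mat N a = mat (2 * N) (2 * N) (\<lambda>(i, c).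
     if i < N - 1 then (if c = i then 1 else 0)
     else if i = N - 1 then - a (int c + 1) else a (int c - int (i - N)))"

lemma det_reduced_sylvester_mat:
  assumes N: "1 \<le> N" and a_top: "\<And>k. int N < k \<Longrightarrow> a k = 0"
  shows "det (reduced_sylvester_mat N a) = - a (int N) * a (int N) ^ N"
proof -
  let ?T = "reduced_sylvester_mat N a"
  let ?d = "\<lambda>i. if i < N - 1 then 1 else if i = N - 1 then - a (int N) else a (int N)"
  have "det ?T = (\<Prod>i = 0..<2 * N. ?T $$ (i, i))"
    by (subst det_lower_triangular[of "2 * N"])
      (auto simp: reduced_sylvester_mat_def prod_list_diag_prod a_top)
  also have "\<dots> = prod ?d {0..<2 * N}"
    by (rule prod.cong[OF refl]) (use N in \<open>auto simp: reduced_sylvester_mat_def\<close>)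
  also have "\<dots> = prod ?d {0..<N - 1} * prod ?d {N - 1..<2 * N}"
    by (rule prod.atLeastLessThan_concat[symmetric]) auto
  also have "prod ?d {N - 1..<2 * N} = ?d (N - 1) * prod ?d {N..<2 * N}"
    using prod.atLeast_Suc_lessThan[of "N - 1" "2 * N" ?d] N by simp
  also have "prod ?d {N..<2 * N} = prod (\<lambda>_. a (int N)) {N..<2 * N}"
    by (rule prod.cong) auto
  also have "\<dots> = a (int N) ^ N"
    by simp
  finally show ?thesis by simp
qed

lemma det_sylvester_seq_mat_recurrence:
  fixes a b :: "int \<Rightarrow> 'a :: comm_ring_1"
  assumes N: "1 \<le> N"
    and a_top: "\<And>k. int N < k \<Longrightarrow> a k = 0"
    and rec: "\<And>k. b k - x * a k + a (k + 1) = (if k = -1 then 1 else 0)"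
  shows "det (sylvester_seq_mat N a b) = a (int N) ^ (N + 1)"
proof -
  let ?S = "sylvester_seq_mat N a b" and ?L = "elim_mat N x"
  have LS: "?L * ?S \<in> carrier_mat (2 * N) (2 * N)"
    using mult_carrier_mat[OF elim_mat_carrier sylvester_seq_mat_carrier] .
  have rotated: "mat (2 * N) (2 * N) (\<lambda>(i, j). (?L * ?S) $$
      (if i < N - 1 then i + N + 1 else if i < N then N else i - N, j))
    = reduced_sylvester_mat N a"
    by (rule eq_matI)
      (use N in \<open>auto simp: reduced_sylvester_mat_def
        elim_mat_mult_sylvester_seq_mat_index[OF rec]\<close>)
  have odd_sign_exp: "odd (N * N + (N - 1))"
    using N by (cases N) auto
  have "det ?S = det (?L * ?S)"
    using det_mult[OF elim_mat_carrier[of N x] sylvester_seq_mat_carrier[of N a b]]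
    by (simp add: det_elim_mat)
  also have "\<dots> = (-1) ^ (N * N + (N - 1)) * det (reduced_sylvester_mat N a)"
    using det_rotate_row_halves[OF LS N] by (simp only: rotated)
  also have "\<dots> = (-1) ^ (N * N + (N - 1)) * (- a (int N) * a (int N) ^ N)"
    by (simp only: det_reduced_sylvester_mat[OF N a_top])
  finally show ?thesis
    using odd_sign_exp by simp
qed

definition coeff_seq :: "nat \<Rightarrow> (nat \<Rightarrow> 'a :: zero) \<Rightarrow> int \<Rightarrow> 'a" where
  "coeff_seq N f k = (if 0 \<le> k \<and> k \<le> int N then f (nat k) else 0)"

lemma binomial_fact_Suc:
  "(n choose Suc k) * fact (Suc k) = (n - k) * (n choose k) * fact k"
proof -
  have "(n choose Suc k) * fact (Suc k) = (Suc k * (n choose Suc k)) * fact k"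
    by (simp add: algebra_simps)
  also have "Suc k * (n choose Suc k) = (n - k) * (n choose k)"
    by (simp only: binomial_absorption binomial_absorb_comp)
  finally show ?thesis .
qed

lemma falling_fact_coeff_seq_recurrence:
  fixes N :: nat and k :: int
  defines "a \<equiv> coeff_seq N (\<lambda>j. int (N choose j) * fact j)"
    and "b \<equiv> coeff_seq N (\<lambda>j. int (N choose j) * fact (j + 1))"
  shows "b k - (int N + 1) * a k + a (k + 1) = (if k = -1 then 1 else 0)"
proof -
  consider "k < -1" | "k = -1" | "0 \<le> k" "k < int N" | "k = int N" | "int N < k"
    by linarith
  then show ?thesis
  proof cases
    case 3
    then obtain j where j: "k = int j" "j < N"
      by (metis nonneg_int_cases of_nat_less_iff)
    have "int ((N choose Suc j) * fact (Suc j)) = int ((N - j) * (N choose j) * fact j)"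
      by (simp only: binomial_fact_Suc)
    then have "a (k + 1) = (int N - int j) * a k"
      using j by (simp add: a_def coeff_seq_def nat_add_distrib algebra_simps)
    moreover have "b k = (int j + 1) * a k"
      using j by (simp add: a_def b_def coeff_seq_def algebra_simps)
    ultimately show ?thesis
      using 3 by (simp add: algebra_simps)
  qed (auto simp: a_def b_def coeff_seq_def algebra_simps)
qed

lemma pascal2_coeff_1: "pascal2_coeff m 1 k = int ((m - 1) choose k) * fact k"
  by (simp add: pascal2_coeff_def pascal_entry_def map_replicate_const sum_list_replicate)

lemma pascal2_coeff_2: "pascal2_coeff m 2 k = int ((m - 1) choose k) * fact (k + 1)"
proof -
  have "pascal_entry (2 # replicate (m - 1 - k) 1 @ replicate k 2) = fact (k + 1)"
    by (simp add: pascal_entry_def map_replicate_const sum_list_replicate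
        del: fact_Suc)
  then show ?thesis
    unfolding pascal2_coeff_def by (simp only: of_nat_fact)
qed

lemma pascal2_sylvester_eq_sylvester_seq_mat:
  "pascal2_sylvester (Suc N) = sylvester_seq_mat N
     (coeff_seq N (\<lambda>j. int (N choose j) * fact j))
     (coeff_seq N (\<lambda>j. int (N choose j) * fact (j + 1)))"
  by (rule eq_matI)
    (auto simp: pascal2_sylvester_def sylvester_seq_mat_def coeff_seq_def pascal2_coeff_2
      pascal2_coeff_1[unfolded One_nat_def] Let_def nat_diff_distrib' of_nat_diff)

theorem theorem5p1:
  fixes m :: nat
  assumes "m \<ge> 2"
  shows "pascal_det2 m = (fact (m - 1)) ^ m"
proof -
  define N where "N = m - 1"
  have m: "m = Suc N" and N: "1 \<le> N"
    using assms by (simp_all add: N_def)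
  have "pascal_det2 m = det (sylvester_seq_mat N
      (coeff_seq N (\<lambda>j. int (N choose j) * fact j))
      (coeff_seq N (\<lambda>j. int (N choose j) * fact (j + 1))))"
    by (simp add: pascal_det2_def m pascal2_sylvester_eq_sylvester_seq_mat)
  also have "\<dots> = coeff_seq N (\<lambda>j. int (N choose j) * fact j) (int N) ^ (N + 1)"
    by (rule det_sylvester_seq_mat_recurrence[OF N _ falling_fact_coeff_seq_recurrence])
      (simp add: coeff_seq_def)
  finally show ?thesis
    by (simp add: m coeff_seq_def)
qed

end
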